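(* Let $m\geq 2$ and $H\in\mathbb{R}^{m\times m}$. Let $A\subset\mathbb{R}^m$ be a nonempty set with $A\neq\{0\}$, and let $f:A\to\mathbb{R}$ be defined by $f(x):=x^THx$. Then $f$ is objective if and only if there exist a nonempty set $\Gamma\subset\mathbb{R}_+$ and $\alpha\in\mathbb{R}$ such that $A=\Gamma\cdot S^{m-1}:=\{tx\mid t\in\Gamma,\ x\in S^{m-1}\}$ and $\tfrac12(H+H^T)=\alpha I_m$.
   Context: $\mathbb{R}^m$ carries the usual inner product and Euclidean norm $\|\cdot\|$, and its elements are regarded as $m\times1$ column matrices. $\mathbb{R}_+=[0,\infty)$, $S^{m-1}:=\{x\in\mathbb{R}^m\mid\|x\|=1\}$, and $I_m$ is the $m\times m$ identity matrix. $\mathcal{Q}_m:=\{Q\in\mathbb{R}^{m\times m}\mid Q^TQ=I_m,\ \det Q=1\}$. A subset $A\subset\mathbb{R}^m$ is called objective if $Qy\in A$ for all $y\in A$ and all $Q\in\mathcal{Q}_m$. A function $f:A\to\mathbb{R}$ is called objective if its domain $A$ is objective and $f(Qy)=f(y)$ for all $y\in A$ and all $Q\in\mathcal{Q}_m$. *)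

theory Defs
  imports "HOL-Analysis.Analysis"
begin

definition rotations :: "(real^'n^'n) set" where
  "rotations = {Q. transpose Q ** Q = mat 1 \<and> det Q = 1}"

definition objective_set :: "(real^'n) set \<Rightarrow> bool" where
  "objective_set A \<longleftrightarrow> (\<forall>Q\<in>rotations. \<forall>y\<in>A. Q *v y \<in> A)"

definition objective_fun :: "(real^'n) set \<Rightarrow> (real^'n \<Rightarrow> real) \<Rightarrow> bool" where
  "objective_fun A f \<longleftrightarrow> objective_set A \<and> (\<forall>Q\<in>rotations. \<forall>y\<in>A. f (Q *v y) = f y)"

end

theory Submission
  imports Defs
begin

text \<open>In dimension at least 2 the rotations act transitively on every sphere, so a function on A
  is objective exactly when A is a union of spheres (about 0) and the function depends only on
  the norm. The quadratic form of H equals that of its symmetric part S; if it is constant on a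
  sphere of radius r > 0, evaluating at r e_i and at r (e_i + e_j)/sqrt 2 shows that the diagonal
  of S is constant and its off-diagonal entries vanish. Conversely S = \<alpha> I gives
  x^T H x = \<alpha> |x|^2.\<close>

lemma rotations_eq_rotation_matrix: "Q \<in> rotations \<longleftrightarrow> rotation_matrix (Q :: real^'n^'n)"
  by (simp add: rotations_def rotation_matrix_def orthogonal_matrix)

lemma norm_rotation_mult:
  assumes "Q \<in> rotations"
  shows "norm (Q *v x) = norm (x :: real^'n)"
proof -
  have "orthogonal_matrix Q"
    using assms by (simp add: rotations_eq_rotation_matrix rotation_matrix_def)
  then have "orthogonal_transformation ((*v) Q)"
    by (simp add: orthogonal_transformation_matrix matrix_of_matrix_vector_mul)
  then show ?thesis
    by (simp add: orthogonal_transformation)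
qed

lemma rotation_mult_exists:
  fixes a b :: "real^'n"
  assumes "2 \<le> CARD('n)" and "norm a = norm b"
  obtains Q where "Q \<in> rotations" and "Q *v a = b"
proof -
  obtain f where f: "orthogonal_transformation f" "det (matrix f) = 1" "f a = b"
    using rotation_exists[OF assms] by metis
  have "linear f" and "orthogonal_matrix (matrix f)"
    using f(1) by (simp_all add: orthogonal_transformation_matrix)
  then have "matrix f *v a = b" and "matrix f \<in> rotations"
    using f(2,3) by (simp_all add: matrix_works rotations_eq_rotation_matrix rotation_matrix_def)
  then show thesis
    using that by blast
qed

lemma objective_fun_iff_norm_invariant:
  fixes A :: "(real^'n) set"
  assumes "2 \<le> CARD('n)"
  shows "objective_fun A f \<longleftrightarrow>
    (\<forall>y\<in>A. \<forall>x. norm x = norm y \<longrightarrow> x \<in> A \<and> f x = f y)"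
proof
  assume obj: "objective_fun A f"
  show "\<forall>y\<in>A. \<forall>x. norm x = norm y \<longrightarrow> x \<in> A \<and> f x = f y"
  proof (intro ballI allI impI)
    fix y x :: "real^'n"
    assume "y \<in> A" and "norm x = norm y"
    obtain Q where "Q \<in> rotations" and "Q *v y = x"
      using rotation_mult_exists[OF assms \<open>norm x = norm y\<close>[symmetric]] .
    from obj \<open>Q \<in> rotations\<close> \<open>y \<in> A\<close> have "Q *v y \<in> A \<and> f (Q *v y) = f y"
      by (simp add: objective_fun_def objective_set_def)
    with \<open>Q *v y = x\<close> show "x \<in> A \<and> f x = f y"
      by simp
  qed
next
  assume inv: "\<forall>y\<in>A. \<forall>x. norm x = norm y \<longrightarrow> x \<in> A \<and> f x = f y"
  have "Q *v y \<in> A \<and> f (Q *v y) = f y" if "Q \<in> rotations" and "y \<in> A" for Q y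
    using bspec[OF inv \<open>y \<in> A\<close>, rule_format, OF norm_rotation_mult[OF \<open>Q \<in> rotations\<close>]] .
  then show "objective_fun A f"
    unfolding objective_fun_def objective_set_def by blast
qed

lemma mem_scaled_unit_sphere_iff:
  fixes z :: "'a :: {real_normed_vector, perfect_space}"
  assumes "\<Gamma> \<subseteq> {0..}"
  shows "z \<in> {t *\<^sub>R x | t x. t \<in> \<Gamma> \<and> norm x = 1} \<longleftrightarrow> norm z \<in> \<Gamma>"
proof
  assume "z \<in> {t *\<^sub>R x | t x. t \<in> \<Gamma> \<and> norm x = 1}"
  then obtain t x where "z = t *\<^sub>R x" "t \<in> \<Gamma>" "norm x = 1"
    by blast
  moreover have "t \<ge> 0"
    using assms \<open>t \<in> \<Gamma>\<close> by auto
  ultimately show "norm z \<in> \<Gamma>"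
    by simp
next
  assume z: "norm z \<in> \<Gamma>"
  obtain u :: 'a where "norm u = 1"
    using vector_choose_size zero_le_one by metis
  then have "z = norm z *\<^sub>R (if z = 0 then u else z /\<^sub>R norm z) \<and>
      norm (if z = 0 then u else z /\<^sub>R norm z) = 1"
    by simp
  then show "z \<in> {t *\<^sub>R x | t x. t \<in> \<Gamma> \<and> norm x = 1}"
    using z by blast
qed

lemma norm_closed_eq_scaled_unit_sphere:
  fixes A :: "'a :: {real_normed_vector, perfect_space} set"
  assumes "\<And>x y. y \<in> A \<Longrightarrow> norm x = norm y \<Longrightarrow> x \<in> A"
  shows "A = {t *\<^sub>R x | t x. t \<in> norm ` A \<and> norm x = 1}"
proof -
  have "norm ` A \<subseteq> {0..}"
    by auto
  from mem_scaled_unit_sphere_iff[OF this]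
  have "z \<in> {t *\<^sub>R x | t x. t \<in> norm ` A \<and> norm x = 1} \<longleftrightarrow> norm z \<in> norm ` A" for z :: 'a .
  moreover have "norm z \<in> norm ` A \<longleftrightarrow> z \<in> A" for z
    using assms by auto
  ultimately show ?thesis
    by blast
qed

lemma quadratic_form_symmetric_part:
  "x \<bullet> (H *v x) = x \<bullet> (((1/2) *\<^sub>R (H + transpose H)) *v (x :: real^'n))"
proof -
  have "x \<bullet> (transpose H *v x) = x \<bullet> (H *v x)"
    by (simp add: dot_lmul_matrix[symmetric] inner_commute)
  then show ?thesis
    by (simp add: matrix_vector_mult_add_rdistrib scaleR_matrix_vector_assoc[symmetric] inner_add_right)
qed

lemma quadratic_form_scaleR:
  "(t *\<^sub>R x) \<bullet> (S *v (t *\<^sub>R x)) = t\<^sup>2 * (x \<bullet> (S *v (x :: real^'n)))"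
  by (simp add: matrix_vector_mult_scaleR power2_eq_square)

lemma quadratic_form_add:
  "(a + b) \<bullet> (S *v (a + b)) =
     a \<bullet> (S *v a) + b \<bullet> (S *v b) + a \<bullet> (S *v b) + b \<bullet> (S *v (a :: real^'n))"
  by (simp add: matrix_vector_right_distrib inner_add_left inner_add_right)

lemma quadratic_form_axis: "axis i 1 \<bullet> (S *v axis j 1) = (S :: real^'n^'n) $ i $ j"
  by (simp add: matrix_vector_mult_basis inner_axis' column_def)

lemma symmetric_eq_scalar_if_quadratic_form_const_on_sphere:
  fixes S :: "real^'n^'n"
  assumes sym: "transpose S = S" and r: "r > 0"
    and const: "\<And>x. norm x = r \<Longrightarrow> x \<bullet> (S *v x) = c"
  shows "S = (c / r\<^sup>2) *\<^sub>R mat 1"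
proof -
  have diag: "S $ i $ i = c / r\<^sup>2" for i
  proof -
    have "(r *\<^sub>R axis i 1) \<bullet> (S *v (r *\<^sub>R axis i 1)) = c"
      using r by (intro const) simp
    then have "r\<^sup>2 * S $ i $ i = c"
      by (simp only: quadratic_form_scaleR quadratic_form_axis)
    then show ?thesis
      using r by (simp add: field_simps)
  qed
  have off_diag: "S $ i $ j = 0" if "i \<noteq> j" for i j
  proof -
    let ?v = "axis i (1::real) + axis j 1"
    have "norm ?v = sqrt 2"
      using that by (simp add: norm_eq_sqrt_inner inner_add_left inner_add_right inner_axis_axis)
    then have "((r / sqrt 2) *\<^sub>R ?v) \<bullet> (S *v ((r / sqrt 2) *\<^sub>R ?v)) = c"
      using r by (intro const) simp
    then have "(r / sqrt 2)\<^sup>2 * (S$i$i + S$j$j + S$i$j + S$j$i) = c"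
      by (simp only: quadratic_form_scaleR quadratic_form_add quadratic_form_axis)
    moreover have "S $ j $ i = S $ i $ j"
      using sym by (metis transpose_def vec_lambda_beta)
    ultimately have "c + r\<^sup>2 * S $ i $ j = c"
      using r by (simp add: diag power_divide field_simps)
    then show ?thesis
      using r by simp
  qed
  show ?thesis
    by (simp add: vec_eq_iff mat_def diag off_diag)
qed

lemma symmetric_part_eq_scalar_if_quadratic_form_const_on_sphere:
  fixes H :: "real^'n^'n"
  assumes "r > 0" and const: "\<And>x. norm x = r \<Longrightarrow> x \<bullet> (H *v x) = c"
  shows "(1/2) *\<^sub>R (H + transpose H) = (c / r\<^sup>2) *\<^sub>R mat 1"
proof -
  let ?S = "(1/2) *\<^sub>R (H + transpose H)"
  have "transpose ?S = ?S"
    by (simp add: vec_eq_iff transpose_def)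
  moreover have "x \<bullet> (?S *v x) = c" if "norm x = r" for x
    using const[OF that] quadratic_form_symmetric_part[of x H] by (simp only:)
  ultimately show ?thesis
    using symmetric_eq_scalar_if_quadratic_form_const_on_sphere \<open>r > 0\<close> by blast
qed

lemma quadratic_form_eq_scalar_norm:
  assumes "(1/2) *\<^sub>R (H + transpose H) = \<alpha> *\<^sub>R mat 1"
  shows "x \<bullet> (H *v x) = \<alpha> * (norm (x :: real^'n))\<^sup>2"
  by (simp add: quadratic_form_symmetric_part[of x H] assms scaleR_matrix_vector_assoc[symmetric]
      power2_norm_eq_inner)

theorem corollary2:
  fixes H :: "real^'n^'n" and A :: "(real^'n) set"
  assumes "CARD('n) \<ge> 2"
    and "A \<noteq> {}" and "A \<noteq> {0}"
  shows "objective_fun A (\<lambda>x. x \<bullet> (H *v x)) \<longleftrightarrow>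
    (\<exists>\<Gamma> :: real set. \<exists>\<alpha> :: real. \<Gamma> \<noteq> {} \<and> \<Gamma> \<subseteq> {0..} \<and>
       A = {t *\<^sub>R x | t x. t \<in> \<Gamma> \<and> norm x = 1} \<and>
       (1/2) *\<^sub>R (H + transpose H) = \<alpha> *\<^sub>R mat 1)"
  (is "_ \<longleftrightarrow> (\<exists>\<Gamma> \<alpha>. _ \<and> _ \<and> A = ?shells \<Gamma> \<and> ?S = _)")
proof
  assume "objective_fun A (\<lambda>x. x \<bullet> (H *v x))"
  then have inv: "\<And>x y. y \<in> A \<Longrightarrow> norm x = norm y \<Longrightarrow>
      x \<in> A \<and> x \<bullet> (H *v x) = y \<bullet> (H *v y)"
    unfolding objective_fun_iff_norm_invariant[OF assms(1)] by blast
  then have shells: "A = ?shells (norm ` A)"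
    by (intro norm_closed_eq_scaled_unit_sphere) blast
  obtain y where "y \<in> A" and "y \<noteq> 0"
    using assms(2,3) by blast
  have "norm y > 0"
    using \<open>y \<noteq> 0\<close> by simp
  moreover have "x \<bullet> (H *v x) = y \<bullet> (H *v y)" if "norm x = norm y" for x
    using inv[OF \<open>y \<in> A\<close> that] by (rule conjunct2)
  ultimately have S: "?S = (y \<bullet> (H *v y) / (norm y)\<^sup>2) *\<^sub>R mat 1"
    by (rule symmetric_part_eq_scalar_if_quadratic_form_const_on_sphere)
  show "\<exists>\<Gamma> \<alpha>. \<Gamma> \<noteq> {} \<and> \<Gamma> \<subseteq> {0..} \<and> A = ?shells \<Gamma> \<and> ?S = \<alpha> *\<^sub>R mat 1"
  proof (intro exI conjI)
    show "norm ` A \<noteq> {}" and "norm ` A \<subseteq> {0..}"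
      using assms(2) by auto
  qed (fact shells, fact S)
next
  assume "\<exists>\<Gamma> \<alpha>. \<Gamma> \<noteq> {} \<and> \<Gamma> \<subseteq> {0..} \<and> A = ?shells \<Gamma> \<and> ?S = \<alpha> *\<^sub>R mat 1"
  then obtain \<Gamma> \<alpha> where \<Gamma>: "\<Gamma> \<subseteq> {0..}" and A: "A = ?shells \<Gamma>" and S: "?S = \<alpha> *\<^sub>R mat 1"
    by blast
  have mem_A: "z \<in> A \<longleftrightarrow> norm z \<in> \<Gamma>" for z
    unfolding A by (rule mem_scaled_unit_sphere_iff[OF \<Gamma>])
  show "objective_fun A (\<lambda>x. x \<bullet> (H *v x))"
    unfolding objective_fun_iff_norm_invariant[OF assms(1)]
    by (simp add: mem_A quadratic_form_eq_scalar_norm[OF S])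
qed

end
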